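(* Let $(X,d)$ be a metric space which is not a singleton, let $p\in[1,\infty)$ and let $(a_n)_{n\in\mathbb{N}^*}$ be a sequence of positive reals with $\sum_{n=0}^\infty a_n<\infty$. Let $\tau_T$ be the Tychonoff topology on $\ell_\infty(X)$ and $\tau_{d_{p,(a_n)}}$ the topology induced by the metric $d_{p,(a_n)}$. Then $\tau_T=\tau_{d_{p,(a_n)}}$ if and only if $(X,d)$ is bounded.
   Context: $\mathbb{N}^*=\{0,1,2,\dots\}$. For a metric space $(X,d)$, $\ell_\infty(X)$ denotes the set of all bounded sequences $(x_n)_{n\in\mathbb{N}^*}$ of elements of $X$. For a sequence $(a_n)$ of nonnegative reals, $p\in[1,\infty)$ and $x=(x_n),y=(y_n)\in\ell_\infty(X)$, $d_{p,(a_n)}(x,y):=\left(\sum_{n=0}^\infty a_n d^p(x_n,y_n)\right)^{1/p}$. The Tychonoff topology on $\ell_\infty(X)$ is the subspace topology induced from the product topology on $\prod_{n\in\mathbb{N}^*}X$, i.e. the topology of coordinatewise convergence. *)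

theory Defs
  imports "HOL-Analysis.Analysis"
begin

definition ell_infty :: "(nat \<Rightarrow> 'a::metric_space) set" where
  "ell_infty = {x. bounded (range x)}"

definition dpa :: "real \<Rightarrow> (nat \<Rightarrow> real) \<Rightarrow> (nat \<Rightarrow> 'a::metric_space) \<Rightarrow> (nat \<Rightarrow> 'a) \<Rightarrow> real" where
  "dpa p a x y = (\<Sum>n. a n * dist (x n) (y n) powr p) powr (1 / p)"

definition tychonoff_ell :: "(nat \<Rightarrow> 'a::metric_space) topology" where
  "tychonoff_ell = subtopology (product_topology (\<lambda>_. euclidean) UNIV) ell_infty"

definition dpa_topology :: "real \<Rightarrow> (nat \<Rightarrow> real) \<Rightarrow> (nat \<Rightarrow> 'a::metric_space) topology" where
  "dpa_topology p a = Metric_space.mtopology ell_infty (dpa p a)"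

end

theory Submission
  imports Defs
begin

text \<open>
  Every coordinate map is Lipschitz for \<open>d\<^sub>p\<close>, since \<open>a\<^sub>k d(x\<^sub>k, y\<^sub>k)\<^sup>p \<le> d\<^sub>p(x, y)\<^sup>p\<close>;
  hence the Tychonoff topology is always coarser than the \<open>d\<^sub>p\<close>-topology.
  If \<open>X\<close> has diameter \<open>D\<close>, then \<open>d\<^sub>p(x, y)\<^sup>p \<le> \<delta>\<^sup>p \<Sum> a\<^sub>n + D\<^sup>p \<Sum>\<^bsub>n\<ge>N\<^esub> a\<^sub>n\<close> whenever
  the first \<open>N\<close> coordinates are \<open>\<delta>\<close>-close, so small \<open>d\<^sub>p\<close>-balls contain Tychonoff neighbourhoods.
  If \<open>X\<close> is unbounded, pick \<open>z\<^sub>k\<close> with \<open>a\<^sub>k d(c, z\<^sub>k)\<^sup>p \<ge> 1\<close>: the sequences equal to \<open>c\<close> except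
  for \<open>z\<^sub>k\<close> at position \<open>k\<close> converge coordinatewise to the constant sequence \<open>c\<close>, but stay
  at \<open>d\<^sub>p\<close>-distance at least 1 from it.
\<close>

lemma powr_convex_nonneg:
  fixes p :: real
  assumes "1 \<le> p"
  shows "convex_on {0..} (\<lambda>x. x powr p)"
proof
  fix t x y :: real
  assume t: "0 < t" "t < 1" and xy: "x \<in> {0..}" "y \<in> {0..}"
  show "((1 - t) *\<^sub>R x + t *\<^sub>R y) powr p \<le> (1 - t) * x powr p + t * y powr p"
  proof (cases "x = 0 \<or> y = 0")
    case True
    have "s powr p \<le> s" if "0 \<le> s" "s \<le> 1" for s :: real
      using that assms by (metis less_eq_real_def powr_0 powr_le_one_le)
    then show ?thesis
      using True t xy by (auto simp: powr_mult intro!: mult_right_mono)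
  next
    case False
    then show ?thesis
      using convex_onD[OF powr_convex[OF assms], of t x y] t xy by simp
  qed
qed simp

lemma powr_inverse_less_iff:
  fixes s r p :: real
  assumes "0 \<le> s" "0 \<le> r" "0 < p"
  shows "s powr (1 / p) < r \<longleftrightarrow> s < r powr p"
proof
  assume "s powr (1 / p) < r"
  then have "(s powr (1 / p)) powr p < r powr p"
    using assms by (intro powr_less_mono2) auto
  then show "s < r powr p"
    using assms by (simp add: powr_powr)
next
  assume "s < r powr p"
  then have "s powr (1 / p) < (r powr p) powr (1 / p)"
    using assms by (intro powr_less_mono2) auto
  then show "s powr (1 / p) < r"
    using assms by (simp add: powr_powr)
qed

lemma summable_powr_add:
  fixes a u v :: "nat \<Rightarrow> real"
  assumes p: "1 \<le> p" and a: "\<And>n. 0 \<le> a n" and u: "\<And>n. 0 \<le> u n" and v: "\<And>n. 0 \<le> v n"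
    and su: "summable (\<lambda>n. a n * u n powr p)" and sv: "summable (\<lambda>n. a n * v n powr p)"
  shows "summable (\<lambda>n. a n * (u n + v n) powr p)"
proof (rule summable_comparison_test)
  show "summable (\<lambda>n. 2 powr p * (a n * u n powr p) + 2 powr p * (a n * v n powr p))"
    using su sv by (intro summable_add summable_mult)
  have "(u n + v n) powr p \<le> 2 powr p * u n powr p + 2 powr p * v n powr p" for n
  proof -
    have "((u n + v n) / 2) powr p \<le> (1 - 1/2) * u n powr p + 1/2 * v n powr p"
      using convex_onD[OF powr_convex_nonneg[OF p], of "1/2" "u n" "v n"] u v
      by (simp add: field_simps)
    then have "2 * (u n + v n) powr p \<le> 2 powr p * u n powr p + 2 powr p * v n powr p"
      using u v p by (simp add: powr_divide field_simps)
    then show ?thesis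
      using powr_ge_zero[of "u n + v n" p] by linarith
  qed
  then have "a n * (u n + v n) powr p \<le> a n * (2 powr p * u n powr p + 2 powr p * v n powr p)" for n
    using a by (rule mult_left_mono)
  then show "\<exists>N. \<forall>n\<ge>N. norm (a n * (u n + v n) powr p)
      \<le> 2 powr p * (a n * u n powr p) + 2 powr p * (a n * v n powr p)"
    using a by (simp add: algebra_simps abs_mult)
qed

lemma weighted_minkowski_pos:
  fixes a u v :: "nat \<Rightarrow> real"
  assumes p: "1 \<le> p" and a: "\<And>n. 0 \<le> a n" and u: "\<And>n. 0 \<le> u n" and v: "\<And>n. 0 \<le> v n"
    and su: "(\<lambda>n. a n * u n powr p) sums (A powr p)" and sv: "(\<lambda>n. a n * v n powr p) sums (B powr p)"
    and A: "0 < A" and B: "0 < B"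
  shows "(\<Sum>n. a n * (u n + v n) powr p) \<le> (A + B) powr p"
proof -
  \<comment> \<open>chosen so that \<open>(u + v)/(A + B) = (1 - t) (u/A) + t (v/B)\<close>, a convex combination\<close>
  define t where "t = B / (A + B)"
  have t: "0 \<le> t" "t \<le> 1" "1 - t = A / (A + B)"
    using A B by (auto simp: t_def field_simps)
  define g where
    "g n = (A + B) powr p * ((1 - t) / A powr p * (a n * u n powr p) + t / B powr p * (a n * v n powr p))"
    for n
  have g_sums: "g sums (A + B) powr p"
  proof -
    have "g sums ((A + B) powr p * ((1 - t) / A powr p * A powr p + t / B powr p * B powr p))"
      unfolding g_def by (intro sums_mult sums_add su sv)
    then show ?thesis
      using A B by simp
  qed
  have le_g: "a n * (u n + v n) powr p \<le> g n" for n
  proof -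
    have "(u n + v n) / (A + B) = (1 - t) * (u n / A) + t * (v n / B)"
      unfolding t(3) using A B by (simp add: t_def add_divide_distrib)
    then have "((u n + v n) / (A + B)) powr p \<le> (1 - t) * (u n / A) powr p + t * (v n / B) powr p"
      using convex_onD[OF powr_convex_nonneg[OF p], of t "u n / A" "v n / B"] t u v A B by simp
    then have "(u n + v n) powr p
        \<le> (A + B) powr p * ((1 - t) / A powr p * u n powr p + t / B powr p * v n powr p)"
      using u v A B by (simp add: powr_divide divide_le_eq algebra_simps)
    then have "a n * (u n + v n) powr p
        \<le> a n * ((A + B) powr p * ((1 - t) / A powr p * u n powr p + t / B powr p * v n powr p))"
      using a by (rule mult_left_mono)
    then show ?thesis
      unfolding g_def by (simp add: algebra_simps)
  qed
  have "(\<Sum>n. a n * (u n + v n) powr p) \<le> suminf g"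
    using le_g summable_powr_add[OF p a u v sums_summable[OF su] sums_summable[OF sv]]
      sums_summable[OF g_sums] by (rule suminf_le)
  then show ?thesis
    using sums_unique[OF g_sums] by simp
qed

lemma weighted_minkowski_null:
  fixes a u v :: "nat \<Rightarrow> real"
  assumes a: "\<And>n. 0 \<le> a n" and u: "\<And>n. 0 \<le> u n"
    and su: "summable (\<lambda>n. a n * u n powr p)" and null: "(\<Sum>n. a n * u n powr p) = 0"
  shows "(\<lambda>n. a n * (u n + v n) powr p) = (\<lambda>n. a n * v n powr p)"
proof
  fix n
  have "a n * u n powr p = 0"
    using null suminf_eq_zero_iff[OF su] a u by simp
  then show "a n * (u n + v n) powr p = a n * v n powr p"
    by auto
qed

lemma weighted_minkowski:
  fixes a u v :: "nat \<Rightarrow> real"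
  assumes p: "1 \<le> p" and a: "\<And>n. 0 \<le> a n" and u: "\<And>n. 0 \<le> u n" and v: "\<And>n. 0 \<le> v n"
    and su: "summable (\<lambda>n. a n * u n powr p)" and sv: "summable (\<lambda>n. a n * v n powr p)"
  shows "(\<Sum>n. a n * (u n + v n) powr p) powr (1 / p)
    \<le> (\<Sum>n. a n * u n powr p) powr (1 / p) + (\<Sum>n. a n * v n powr p) powr (1 / p)"
proof -
  define A where "A = (\<Sum>n. a n * u n powr p) powr (1 / p)"
  define B where "B = (\<Sum>n. a n * v n powr p) powr (1 / p)"
  have Su: "(\<Sum>n. a n * u n powr p) = A powr p" and Sv: "(\<Sum>n. a n * v n powr p) = B powr p"
    using p suminf_nonneg[OF su] suminf_nonneg[OF sv] a
    by (simp_all add: A_def B_def powr_powr)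
  consider "A = 0" | "B = 0" | "0 < A" "0 < B"
    using A_def B_def by fastforce
  then show ?thesis
  proof cases
    case 1
    then show ?thesis
      using weighted_minkowski_null[OF a u su, of v] Su p by (simp add: B_def)
  next
    case 2
    then show ?thesis
      using weighted_minkowski_null[OF a v sv, of u] Sv p by (simp add: A_def add.commute)
  next
    case 3
    have "(\<lambda>n. a n * u n powr p) sums A powr p" "(\<lambda>n. a n * v n powr p) sums B powr p"
      using summable_sums[OF su] summable_sums[OF sv] by (simp_all only: Su Sv)
    then have "(\<Sum>n. a n * (u n + v n) powr p) \<le> (A + B) powr p"
      by (rule weighted_minkowski_pos[OF p a u v _ _ 3])
    then have "(\<Sum>n. a n * (u n + v n) powr p) powr (1 / p) \<le> ((A + B) powr p) powr (1 / p)"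
      using p a u v by (intro powr_mono2 suminf_nonneg summable_powr_add su sv) auto
    then show ?thesis
      using 3 p by (simp add: A_def B_def powr_powr)
  qed
qed

definition dpa_sum :: "real \<Rightarrow> (nat \<Rightarrow> real) \<Rightarrow> (nat \<Rightarrow> 'a::metric_space) \<Rightarrow> (nat \<Rightarrow> 'a) \<Rightarrow> real"
  where "dpa_sum p a x y = (\<Sum>n. a n * dist (x n) (y n) powr p)"

lemma dpa_eq_dpa_sum_powr: "dpa p a x y = dpa_sum p a x y powr (1 / p)"
  by (simp add: dpa_def dpa_sum_def)

lemma ell_infty_dist_bounded:
  assumes "x \<in> ell_infty" "y \<in> ell_infty"
  obtains B where "\<And>n. dist (x n) (y n) \<le> B"
proof -
  fix c :: 'a
  obtain Bx By where "\<And>n. dist c (x n) \<le> Bx" "\<And>n. dist c (y n) \<le> By"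
    using assms unfolding ell_infty_def bounded_any_center[of _ c] by blast
  then have "dist (x n) (y n) \<le> Bx + By" for n
    by (metis add_mono dist_commute dist_triangle order_trans)
  then show ?thesis
    using that by blast
qed

lemma summable_weighted_powr_bounded:
  fixes a u :: "nat \<Rightarrow> real"
  assumes "summable a" "\<And>n. 0 \<le> a n" "0 \<le> p" "\<And>n. 0 \<le> u n" "\<And>n. u n \<le> B"
  shows "summable (\<lambda>n. a n * u n powr p)"
proof (rule summable_comparison_test)
  show "summable (\<lambda>n. a n * B powr p)"
    using assms(1) by (rule summable_mult2)
  show "\<exists>N. \<forall>n\<ge>N. norm (a n * u n powr p) \<le> a n * B powr p"
    using assms(2-5) by (auto intro!: mult_left_mono powr_mono2)
qed

lemma openin_tychonoff_ell_cylinder: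
  "openin tychonoff_ell {y \<in> ell_infty. \<forall>n<N. dist (x n) (y n) < \<delta>}"
proof -
  let ?W = "\<lambda>n. if n < N then ball (x n) \<delta> else UNIV"
  have "openin (product_topology (\<lambda>_. euclidean) UNIV) (PiE UNIV ?W)"
    by (subst openin_PiE_gen) (auto intro: finite_subset[of _ "{..<N}"])
  moreover have "{y \<in> ell_infty. \<forall>n<N. dist (x n) (y n) < \<delta>} = PiE UNIV ?W \<inter> ell_infty"
    by (auto simp: PiE_UNIV_domain Pi_iff split: if_splits)
  ultimately show ?thesis
    unfolding tychonoff_ell_def openin_subtopology by blast
qed

lemma const_in_ell_infty: "(\<lambda>n. c) \<in> ell_infty"
  by (simp add: ell_infty_def)

lemma fun_upd_const_in_ell_infty: "(\<lambda>n. c)(k := z) \<in> ell_infty"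
proof -
  have "range ((\<lambda>n. c)(k := z)) \<subseteq> {c, z}"
    by auto
  then show ?thesis
    unfolding ell_infty_def using bounded_subset[OF finite_imp_bounded[of "{c, z}"]] by simp
qed

lemma limitin_tychonoff_ell_fun_upd_const:
  "limitin tychonoff_ell (\<lambda>k. (\<lambda>n. c)(k := z k)) (\<lambda>n. c) sequentially"
  unfolding tychonoff_ell_def limitin_subtopology limitin_componentwise
proof (intro conjI ballI)
  fix i :: nat
  have "\<forall>\<^sub>F k in sequentially. ((\<lambda>n. c)(k := z k)) i = c"
    by (rule eventually_sequentiallyI[of "Suc i"]) simp
  then show "limitin euclidean (\<lambda>k. ((\<lambda>n. c)(k := z k)) i) c sequentially"
    by (simp add: tendsto_eventually)
qed (auto simp: const_in_ell_infty fun_upd_const_in_ell_infty)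

locale dpa_weights =
  fixes p :: real and a :: "nat \<Rightarrow> real"
  assumes p: "1 \<le> p" and a_pos: "\<And>n. 0 < a n" and a_summable: "summable a"
begin

lemma p_pos: "0 < p"
  using p by simp

lemma a_nonneg: "0 \<le> a n"
  using a_pos less_imp_le by blast

lemma summable_dpa_terms:
  assumes "x \<in> ell_infty" "y \<in> ell_infty"
  shows "summable (\<lambda>n. a n * dist (x n) (y n) powr p)"
proof -
  obtain B where B: "\<And>n. dist (x n) (y n) \<le> B"
    using ell_infty_dist_bounded[OF assms] by blast
  show ?thesis
    using p_pos by (intro summable_weighted_powr_bounded[where B = B] a_summable a_nonneg B) auto
qed

lemma dpa_sum_nonneg:
  assumes "x \<in> ell_infty" "y \<in> ell_infty"
  shows "0 \<le> dpa_sum p a x y"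
  unfolding dpa_sum_def using summable_dpa_terms[OF assms] by (rule suminf_nonneg) (simp add: a_nonneg)

lemma weighted_dist_powr_le_dpa_sum:
  assumes "x \<in> ell_infty" "y \<in> ell_infty"
  shows "a k * dist (x k) (y k) powr p \<le> dpa_sum p a x y"
  unfolding dpa_sum_def
  using sum_le_suminf[OF summable_dpa_terms[OF assms], of "{k}"] by (simp add: a_nonneg)

lemma dpa_sum_eq_0_iff:
  assumes "x \<in> ell_infty" "y \<in> ell_infty"
  shows "dpa_sum p a x y = 0 \<longleftrightarrow> x = y"
proof -
  have "dpa_sum p a x y = 0 \<longleftrightarrow> (\<forall>n. a n * dist (x n) (y n) powr p = 0)"
    unfolding dpa_sum_def using summable_dpa_terms[OF assms] by (rule suminf_eq_zero_iff) (simp add: a_nonneg)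
  also have "\<dots> \<longleftrightarrow> x = y"
    using a_pos by (auto simp: fun_eq_iff dual_order.strict_implies_not_eq)
  finally show ?thesis .
qed

lemma dpa_triangle:
  assumes x: "x \<in> ell_infty" and y: "y \<in> ell_infty" and z: "z \<in> ell_infty"
  shows "dpa p a x z \<le> dpa p a x y + dpa p a y z"
proof -
  let ?u = "\<lambda>n. dist (x n) (y n)" and ?v = "\<lambda>n. dist (y n) (z n)"
  have "dpa_sum p a x z \<le> (\<Sum>n. a n * (?u n + ?v n) powr p)"
    unfolding dpa_sum_def
  proof (rule suminf_le)
    show "a n * dist (x n) (z n) powr p \<le> a n * (?u n + ?v n) powr p" for n
      using p_pos by (intro mult_left_mono powr_mono2 dist_triangle a_nonneg) auto
    show "summable (\<lambda>n. a n * (?u n + ?v n) powr p)"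
      by (intro summable_powr_add p a_nonneg zero_le_dist summable_dpa_terms x y z)
  qed (rule summable_dpa_terms[OF x z])
  then have "dpa p a x z \<le> (\<Sum>n. a n * (?u n + ?v n) powr p) powr (1 / p)"
    unfolding dpa_eq_dpa_sum_powr using dpa_sum_nonneg[OF x z] p_pos by (intro powr_mono2) auto
  also have "\<dots> \<le> dpa p a x y + dpa p a y z"
    unfolding dpa_def by (intro weighted_minkowski p a_nonneg zero_le_dist summable_dpa_terms x y z)
  finally show ?thesis .
qed

lemma Metric_space_dpa: "Metric_space ell_infty (dpa p a)"
proof
  fix x y z :: "nat \<Rightarrow> 'b::metric_space"
  show "0 \<le> dpa p a x y"
    by (simp add: dpa_def)
  show "dpa p a x y = dpa p a y x"
    by (simp add: dpa_def dist_commute)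
  show "dpa p a x y = 0 \<longleftrightarrow> x = y" if "x \<in> ell_infty" "y \<in> ell_infty"
    using dpa_sum_eq_0_iff[OF that] by (simp add: dpa_eq_dpa_sum_powr)
  show "dpa p a x z \<le> dpa p a x y + dpa p a y z" if "x \<in> ell_infty" "y \<in> ell_infty" "z \<in> ell_infty"
    using dpa_triangle that by blast
qed

lemma dpa_less_iff:
  assumes "x \<in> ell_infty" "y \<in> ell_infty" "0 < r"
  shows "dpa p a x y < r \<longleftrightarrow> dpa_sum p a x y < r powr p"
  unfolding dpa_eq_dpa_sum_powr using dpa_sum_nonneg[OF assms(1,2)] assms(3) p_pos
  by (intro powr_inverse_less_iff) auto

lemma dist_coordinate_le_dpa:
  assumes x: "x \<in> ell_infty" and y: "y \<in> ell_infty"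
  shows "dist (x k) (y k) \<le> dpa p a x y / a k powr (1 / p)"
proof -
  have "dist (x k) (y k) powr p \<le> dpa_sum p a x y / a k"
    using weighted_dist_powr_le_dpa_sum[OF x y, of k] a_pos[of k] by (simp add: field_simps)
  then have "(dist (x k) (y k) powr p) powr (1 / p) \<le> (dpa_sum p a x y / a k) powr (1 / p)"
    using p_pos by (intro powr_mono2) auto
  then show ?thesis
    using p_pos a_pos[of k] dpa_sum_nonneg[OF x y]
    by (simp add: powr_powr powr_divide dpa_eq_dpa_sum_powr)
qed

lemma continuous_map_dpa_coordinate: "continuous_map (dpa_topology p a) euclidean (\<lambda>x. x k)"
proof -
  interpret dpa: Metric_space ell_infty "dpa p a"
    by (rule Metric_space_dpa)
  have "Lipschitz_continuous_map (metric (ell_infty, dpa p a)) euclidean_metric (\<lambda>x. x k)"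
    unfolding Lipschitz_continuous_map_def
    using dist_coordinate_le_dpa by (auto intro!: exI[of _ "1 / a k powr (1 / p)"])
  then show ?thesis
    unfolding dpa_topology_def using Lipschitz_continuous_imp_continuous_map by fastforce
qed

lemma continuous_map_dpa_tychonoff: "continuous_map (dpa_topology p a) tychonoff_ell id"
  unfolding tychonoff_ell_def continuous_map_in_subtopology continuous_map_componentwise_UNIV
  using continuous_map_dpa_coordinate Metric_space.topspace_mtopology[OF Metric_space_dpa]
  by (auto simp: dpa_topology_def)

lemma dpa_sum_le_head_tail:
  assumes x: "x \<in> ell_infty" and y: "y \<in> ell_infty"
    and head: "\<And>n. n < N \<Longrightarrow> dist (x n) (y n) \<le> \<delta>" and all: "\<And>n. dist (x n) (y n) \<le> D"
  shows "dpa_sum p a x y \<le> \<delta> powr p * suminf a + D powr p * (\<Sum>n. a (n + N))"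
proof -
  define f where "f n = a n * dist (x n) (y n) powr p" for n
  have f: "summable f"
    unfolding f_def by (rule summable_dpa_terms[OF x y])
  have "(\<Sum>n<N. f n) \<le> (\<Sum>n<N. \<delta> powr p * a n)"
    unfolding f_def using head p_pos
    by (intro sum_mono) (simp add: mult.commute mult_left_mono powr_mono2 a_nonneg)
  also have "\<dots> \<le> \<delta> powr p * suminf a"
    unfolding sum_distrib_left[symmetric] using a_summable a_nonneg
    by (intro mult_left_mono sum_le_suminf) auto
  finally have "(\<Sum>n<N. f n) \<le> \<delta> powr p * suminf a" .
  moreover have "(\<Sum>n. f (n + N)) \<le> (\<Sum>n. a (n + N) * D powr p)"
  proof (rule suminf_le)
    show "f (n + N) \<le> a (n + N) * D powr p" for n
      unfolding f_def using p_pos by (intro mult_left_mono powr_mono2 all a_nonneg) auto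
    show "summable (\<lambda>n. f (n + N))"
      using f by (rule summable_ignore_initial_segment)
    show "summable (\<lambda>n. a (n + N) * D powr p)"
      using a_summable by (intro summable_mult2 summable_ignore_initial_segment)
  qed
  moreover have "(\<Sum>n. a (n + N) * D powr p) = D powr p * (\<Sum>n. a (n + N))"
    using suminf_mult2[OF summable_ignore_initial_segment[OF a_summable, of N]] by (metis mult.commute)
  moreover have "dpa_sum p a x y = (\<Sum>n. f (n + N)) + (\<Sum>n<N. f n)"
    unfolding dpa_sum_def f_def[symmetric] by (rule suminf_split_initial_segment[OF f])
  ultimately show ?thesis
    by linarith
qed

lemma dpa_less_if_head_close:
  assumes bounded: "bounded (UNIV :: 'b::metric_space set)" and \<epsilon>: "0 < \<epsilon>"
  obtains N \<delta> where "0 < \<delta>"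
    "\<And>x y :: nat \<Rightarrow> 'b. x \<in> ell_infty \<Longrightarrow> y \<in> ell_infty \<Longrightarrow>
      (\<And>n. n < N \<Longrightarrow> dist (x n) (y n) \<le> \<delta>) \<Longrightarrow> dpa p a x y < \<epsilon>"
proof -
  define D where "D = diameter (UNIV :: 'b set)"
  have D: "dist u v \<le> D" for u v :: 'b
    unfolding D_def using bounded by (rule diameter_bounded_bound) auto
  define \<eta> where "\<eta> = \<epsilon> powr p / 2"
  have \<eta>: "0 < \<eta>"
    using \<epsilon> by (simp add: \<eta>_def)
  have "0 < \<eta> / (D powr p + 1)"
    using \<eta> powr_ge_zero[of D p] by (intro divide_pos_pos) linarith+
  then obtain N where N: "norm (\<Sum>n. a (n + N)) < \<eta> / (D powr p + 1)"
    using suminf_exist_split[OF _ a_summable] by blast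
  have "D powr p * (\<Sum>n. a (n + N)) \<le> D powr p * (\<eta> / (D powr p + 1))"
    using N by (intro mult_left_mono) auto
  also have "\<dots> < \<eta>"
    using \<eta> by (simp add: field_simps add_pos_nonneg)
  finally have tail: "D powr p * (\<Sum>n. a (n + N)) < \<eta>" .
  define \<delta> where "\<delta> = (\<eta> / (suminf a + 1)) powr (1 / p)"
  have A: "0 \<le> suminf a"
    using a_summable a_nonneg by (rule suminf_nonneg)
  have \<delta>: "0 < \<delta>" "\<delta> powr p = \<eta> / (suminf a + 1)"
    using \<eta> A p_pos by (simp_all add: \<delta>_def powr_powr)
  have "\<delta> powr p * suminf a < \<delta> powr p * (suminf a + 1)"
    using \<delta>(1) by simp
  then have head: "\<delta> powr p * suminf a < \<eta>"
    using \<delta>(2) A by simp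
  show ?thesis
  proof (rule that[OF \<delta>(1)])
    fix x y :: "nat \<Rightarrow> 'b"
    assume x: "x \<in> ell_infty" and y: "y \<in> ell_infty"
      and close: "\<And>n. n < N \<Longrightarrow> dist (x n) (y n) \<le> \<delta>"
    have "dpa_sum p a x y < \<epsilon> powr p"
      using dpa_sum_le_head_tail[OF x y, of N \<delta> D] close D head tail by (simp add: \<eta>_def)
    then show "dpa p a x y < \<epsilon>"
      using dpa_less_iff[OF x y \<epsilon>] by simp
  qed
qed

lemma continuous_map_tychonoff_dpa:
  assumes bounded: "bounded (UNIV :: 'b::metric_space set)"
  shows "continuous_map tychonoff_ell (dpa_topology p a :: (nat \<Rightarrow> 'b) topology) id"
proof -
  interpret dpa: Metric_space "ell_infty :: (nat \<Rightarrow> 'b) set" "dpa p a"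
    by (rule Metric_space_dpa)
  have "\<exists>U. openin tychonoff_ell U \<and> x \<in> U \<and> (\<forall>y\<in>U. y \<in> dpa.mball x \<epsilon>)"
    if x: "x \<in> ell_infty" and \<epsilon>: "0 < \<epsilon>" for x :: "nat \<Rightarrow> 'b" and \<epsilon>
  proof -
    obtain N \<delta> where \<delta>: "0 < \<delta>" and close:
      "\<And>y. y \<in> ell_infty \<Longrightarrow> (\<And>n. n < N \<Longrightarrow> dist (x n) (y n) \<le> \<delta>) \<Longrightarrow> dpa p a x y < \<epsilon>"
      using dpa_less_if_head_close[OF bounded \<epsilon>] x by metis
    show ?thesis
      using openin_tychonoff_ell_cylinder[of N x \<delta>] x \<delta> close
      by (intro exI[of _ "{y \<in> ell_infty. \<forall>n<N. dist (x n) (y n) < \<delta>}"]) (auto simp: less_imp_le)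
  qed
  moreover have "topspace tychonoff_ell = ell_infty"
    by (simp add: tychonoff_ell_def)
  ultimately show ?thesis
    unfolding dpa_topology_def dpa.continuous_map_to_metric id_def by blast
qed

lemma not_continuous_map_tychonoff_dpa:
  assumes unbounded: "\<not> bounded (UNIV :: 'b::metric_space set)"
  shows "\<not> continuous_map tychonoff_ell (dpa_topology p a :: (nat \<Rightarrow> 'b) topology) id"
proof
  assume cont: "continuous_map tychonoff_ell (dpa_topology p a :: (nat \<Rightarrow> 'b) topology) id"
  interpret dpa: Metric_space "ell_infty :: (nat \<Rightarrow> 'b) set" "dpa p a"
    by (rule Metric_space_dpa)
  fix c :: 'b
  have "\<exists>y. r \<le> dist c y" for r
    using unbounded unfolding bounded_any_center[of _ c] by (auto simp: not_le intro: less_imp_le)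
  then obtain z where z: "\<And>k. 1 / a k powr (1 / p) \<le> dist c (z k)"
    using choice[of "\<lambda>k y. 1 / a k powr (1 / p) \<le> dist c y"] by blast
  define const where "const = (\<lambda>n::nat. c)"
  define spike where "spike k = const(k := z k)" for k
  have const: "const \<in> ell_infty" and spike: "spike k \<in> ell_infty" for k
    unfolding spike_def const_def by (rule const_in_ell_infty fun_upd_const_in_ell_infty)+
  have "limitin tychonoff_ell spike const sequentially"
    unfolding spike_def const_def by (rule limitin_tychonoff_ell_fun_upd_const)
  then have "limitin (dpa_topology p a) spike const sequentially"
    using continuous_map_limit[OF cont] by simp
  then have "\<forall>\<^sub>F k in sequentially. dpa p a (spike k) const < 1"
    unfolding dpa_topology_def dpa.limitin_metric by (simp add: eventually_conj_iff)
  then obtain k where "dpa p a (spike k) const < 1"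
    by (auto simp: eventually_sequentially)
  moreover have "1 \<le> dpa p a (spike k) const"
  proof -
    have "dist c (z k) \<le> dpa p a const (spike k) / a k powr (1 / p)"
      using dist_coordinate_le_dpa[OF const spike[of k], of k] by (simp add: spike_def const_def)
    then show ?thesis
      using z[of k] a_pos[of k] dpa.commute[of const "spike k"] by (simp add: field_simps)
  qed
  ultimately show False
    by simp
qed

end

theorem mainTheorem4:
  fixes p :: real and a :: "nat \<Rightarrow> real"
  assumes not_singleton: "\<exists>x y :: 'a::metric_space. x \<noteq> y"
    and p: "1 \<le> p"
    and a_pos: "\<And>n. 0 < a n"
    and a_summable: "summable a"
  shows "(tychonoff_ell :: (nat \<Rightarrow> 'a) topology) = dpa_topology p a
         \<longleftrightarrow> bounded (UNIV :: 'a set)"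
proof -
  interpret dpa_weights p a
    using p a_pos a_summable by unfold_locales
  have "(tychonoff_ell :: (nat \<Rightarrow> 'a) topology) = dpa_topology p a
      \<longleftrightarrow> homeomorphic_maps (dpa_topology p a) (tychonoff_ell :: (nat \<Rightarrow> 'a) topology) id id"
    by (simp add: homeomorphic_maps_id)
  also have "\<dots> \<longleftrightarrow> continuous_map (tychonoff_ell :: (nat \<Rightarrow> 'a) topology) (dpa_topology p a) id"
    by (simp add: homeomorphic_maps_def continuous_map_dpa_tychonoff)
  also have "\<dots> \<longleftrightarrow> bounded (UNIV :: 'a set)"
    using continuous_map_tychonoff_dpa not_continuous_map_tychonoff_dpa by blast
  finally show ?thesis .
qed

end
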